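(* Consider the network and loss $\mathcal{L}$ from the context with $|J|=1$. If $\overline{\mathbf{P}}$ is a stationary point of $\mathcal{L}$ that is not a local minimum, then there exist a unit vector $\boldsymbol{\ell}\in\mathbb{R}^D$ and a constant $C<0$ such that $\mathcal{L}(\overline{\mathbf{P}}+\delta\boldsymbol{\ell})-\mathcal{L}(\overline{\mathbf{P}})<0$ for all sufficiently small $\delta>0$ and $\mathcal{L}(\overline{\mathbf{P}}+\delta\boldsymbol{\ell})-\mathcal{L}(\overline{\mathbf{P}})\sim C\delta^2$ as $\delta\to0^+$.
   Context: Fix an integer $d>1$, finite index sets $I$ (hidden neurons), $J$ (output neurons), $K$ (samples), reals $\alpha^+\neq\alpha^-$, and $\rho(z)=\alpha^+z$ for $z\ge0$, $\rho(z)=\alpha^-z$ for $z<0$ (componentwise). Parameters $\mathbf{P}=(W,H)\in\mathbb{R}^D$, $D=|J||I|+|I|d$, $W\in\mathbb{R}^{|I|\times d}$ with rows $\mathbf{w}_i$, $H=(h_{ji})\in\mathbb{R}^{|J|\times|I|}$; output $\hat{\mathbf{y}}(\mathbf{P};\mathbf{x})=H\rho(W\mathbf{x})$; training data $\mathbf{x}_k\in\mathbb{R}^d$, $\mathbf{y}_k\in\mathbb{R}^{|J|}$, $k\in K$; loss $\mathcal{L}(\mathbf{P})=\frac12\sum_{k\in K}\|\hat{\mathbf{y}}(\mathbf{P};\mathbf{x}_k)-\mathbf{y}_k\|^2$. A point $\overline{\mathbf{P}}$ is a stationary point if $\lim_{\alpha\to0^+}\frac{\mathcal{L}(\overline{\mathbf{P}}+\alpha\mathbf{d})-\mathcal{L}(\overline{\mathbf{P}})}{\alpha}\ge0$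 for all $\mathbf{d}\in\mathbb{R}^D$. *)

theory Defs
  imports "HOL-Analysis.Analysis" "HOL-Library.Landau_Symbols"
begin

definition rho :: "real \<Rightarrow> real \<Rightarrow> real \<Rightarrow> real" where
  "rho ap am z = (if z \<ge> 0 then ap * z else am * z)"

text \<open>Parameters P = (W, h): W has rows w_i in R^d (i in I), h = H in R^{1 x I} (|J| = 1).
  Network output yhat(P; x) = sum_i h_i rho(w_i . x).\<close>
definition net_out ::
  "real \<Rightarrow> real \<Rightarrow> (real^'d^'i) \<times> (real^'i) \<Rightarrow> real^'d \<Rightarrow> real" where
  "net_out ap am P x = (\<Sum>i\<in>UNIV. (snd P) $ i * rho ap am ((fst P $ i) \<bullet> x))"

definition loss ::
  "real \<Rightarrow> real \<Rightarrow> 'k set \<Rightarrow> ('k \<Rightarrow> real^'d) \<Rightarrow> ('k \<Rightarrow> real)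
     \<Rightarrow> (real^'d^'i) \<times> (real^'i) \<Rightarrow> real" where
  "loss ap am K xs ys P = (1/2) * (\<Sum>k\<in>K. (net_out ap am P (xs k) - ys k)^2)"

definition stationary_point :: "('a::real_normed_vector \<Rightarrow> real) \<Rightarrow> 'a \<Rightarrow> bool" where
  "stationary_point L P \<longleftrightarrow>
     (\<forall>dir. \<exists>g. ((\<lambda>\<alpha>. (L (P + \<alpha> *\<^sub>R dir) - L P) / \<alpha>) \<longlongrightarrow> g) (at_right 0) \<and> g \<ge> 0)"

definition local_minimum :: "('a::metric_space \<Rightarrow> real) \<Rightarrow> 'a \<Rightarrow> bool" where
  "local_minimum L P \<longleftrightarrow> (\<exists>e>0. \<forall>Q. dist Q P < e \<longrightarrow> L P \<le> L Q)"

end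

theory Submission
  imports Defs
begin

text \<open>Along a ray \<open>P + d (V, a)\<close> on which no pre-activation \<open>w\<^sub>i \<bullet> x\<^sub>k\<close> changes sign, the
  leaky ReLU is positively homogeneous, so the network output moves by \<open>d E + d\<^sup>2 B\<close> and the
  loss by a quartic polynomial in \<open>d\<close> without constant term. Stationarity makes its linear
  coefficient nonnegative on every such ray. Hence the residuals are orthogonal to every hidden
  activation, and \<open>h\<^sub>i G\<^sub>i(v) \<ge> 0\<close>, where \<open>G\<^sub>i(v)\<close> is the first-order gain of moving \<open>w\<^sub>i\<close> by \<open>v\<close>.
  If \<open>G\<^sub>i\<close> vanishes for every unit with \<open>h\<^sub>i = 0\<close>, the loss increment near \<open>P\<close> is a sum of
  nonnegative terms and \<open>P\<close> is a local minimum. Otherwise moving such a \<open>w\<^sub>i\<close> by \<open>v\<close> and \<open>h\<^sub>i\<close>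
  by a suitable \<open>t\<close> gives a ray with zero linear and negative quadratic coefficient.\<close>

lemma asymp_equiv_quartic_leading_quadratic:
  fixes c2 c3 c4 :: real
  assumes "c2 \<noteq> 0"
  shows "(\<lambda>d. d^2 * c2 + d^3 * c3 + d^4 * c4) \<sim>[at_right 0] (\<lambda>d. c2 * d^2)"
proof (rule asymp_equivI')
  have "((\<lambda>d::real. 1 + d * (c3 / c2) + d^2 * (c4 / c2))
      \<longlongrightarrow> 1 + 0 * (c3 / c2) + 0^2 * (c4 / c2)) (at_right 0)"
    by (intro tendsto_intros)
  then have "((\<lambda>d::real. 1 + d * (c3 / c2) + d^2 * (c4 / c2)) \<longlongrightarrow> 1) (at_right 0)"
    by simp
  moreover have "\<forall>\<^sub>F d in at_right 0.
      1 + d * (c3 / c2) + d^2 * (c4 / c2) = (d^2 * c2 + d^3 * c3 + d^4 * c4) / (c2 * d^2)"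
    using eventually_at_right_less[of "0::real"]
    by eventually_elim (use assms in \<open>simp add: field_simps power2_eq_square power3_eq_cube power4_eq_xxxx\<close>)
  ultimately show "((\<lambda>d. (d^2 * c2 + d^3 * c3 + d^4 * c4) / (c2 * d^2)) \<longlongrightarrow> 1) (at_right 0)"
    using tendsto_cong by fastforce
qed

lemma quartic_quotient_tendsto:
  fixes f :: "real \<Rightarrow> real"
  assumes "\<And>d. 0 < d \<Longrightarrow> d \<le> 1 \<Longrightarrow> f d = d * c1 + d^2 * c2 + d^3 * c3 + d^4 * c4"
  shows "((\<lambda>d. f d / d) \<longlongrightarrow> c1) (at_right 0)"
proof -
  have "((\<lambda>d::real. c1 + d * c2 + d^2 * c3 + d^3 * c4)
      \<longlongrightarrow> c1 + 0 * c2 + 0^2 * c3 + 0^3 * c4) (at_right 0)"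
    by (intro tendsto_intros)
  then have "((\<lambda>d::real. c1 + d * c2 + d^2 * c3 + d^3 * c4) \<longlongrightarrow> c1) (at_right 0)"
    by simp
  moreover have "\<forall>\<^sub>F d in at_right 0. c1 + d * c2 + d^2 * c3 + d^3 * c4 = f d / d"
    unfolding eventually_at_right_field
    by (rule exI[of _ 1]) (simp add: assms field_simps power2_eq_square power3_eq_cube power4_eq_xxxx)
  ultimately show ?thesis
    using tendsto_cong by fastforce
qed

lemma unit_direction_of_quadratic_decrease:
  fixes L :: "'a::real_normed_vector \<Rightarrow> real"
  assumes "u \<noteq> 0" and "c2 < 0"
    and ray: "\<And>d. 0 < d \<Longrightarrow> d \<le> 1 \<Longrightarrow> L (P + d *\<^sub>R u) - L P = d^2 * c2 + d^3 * c3 + d^4 * c4"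
  shows "\<exists>l C. norm l = 1 \<and> C < 0 \<and>
    (\<forall>\<^sub>F \<delta> in at_right 0. L (P + \<delta> *\<^sub>R l) - L P < 0) \<and>
    (\<lambda>\<delta>. L (P + \<delta> *\<^sub>R l) - L P) \<sim>[at_right 0] (\<lambda>\<delta>. C * \<delta>^2)"
proof -
  define N where "N = norm u"
  have "N > 0"
    using \<open>u \<noteq> 0\<close> by (simp add: N_def)
  define l where "l = (1 / N) *\<^sub>R u"
  define C where "C = c2 / N^2"
  have "norm l = 1" and "C < 0"
    using \<open>N > 0\<close> \<open>c2 < 0\<close> by (simp_all add: l_def N_def C_def divide_neg_pos)
  have expansion: "\<forall>\<^sub>F \<delta> in at_right 0.
      \<delta>^2 * C + \<delta>^3 * (c3 / N^3) + \<delta>^4 * (c4 / N^4) = L (P + \<delta> *\<^sub>R l) - L P"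
    unfolding eventually_at_right_field
  proof (intro exI[of _ N] conjI allI impI)
    fix \<delta> :: real
    assume "0 < \<delta>" "\<delta> < N"
    then have "L (P + \<delta> *\<^sub>R l) - L P = (\<delta> / N)^2 * c2 + (\<delta> / N)^3 * c3 + (\<delta> / N)^4 * c4"
      using ray[of "\<delta> / N"] by (simp add: l_def)
    then show "\<delta>^2 * C + \<delta>^3 * (c3 / N^3) + \<delta>^4 * (c4 / N^4) = L (P + \<delta> *\<^sub>R l) - L P"
      by (simp add: C_def power_divide)
  qed (use \<open>N > 0\<close> in simp)
  have equiv: "(\<lambda>\<delta>. L (P + \<delta> *\<^sub>R l) - L P) \<sim>[at_right 0] (\<lambda>\<delta>. C * \<delta>^2)"
    by (rule asymp_equiv_transfer[OF asymp_equiv_quartic_leading_quadratic expansion])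
      (use \<open>C < 0\<close> in simp_all)
  have "\<forall>\<^sub>F \<delta> in at_right 0. L (P + \<delta> *\<^sub>R l) - L P < 0"
    using asymp_equiv_eventually_neg_iff[OF equiv] eventually_at_right_less[of "0::real"]
    by eventually_elim (use \<open>C < 0\<close> in \<open>simp add: mult_neg_pos\<close>)
  with \<open>norm l = 1\<close> \<open>C < 0\<close> equiv show ?thesis
    by blast
qed

lemma rho_increment_homogeneous:
  assumes "a = 0 \<or> \<bar>b\<bar> < \<bar>a\<bar>" and "0 \<le> t" and "t \<le> 1"
  shows "rho ap am (a + t * b) - rho ap am a = t * (rho ap am (a + b) - rho ap am a)"
proof (cases "a = 0")
  case True
  then show ?thesis
    using assms by (auto simp: rho_def zero_le_mult_iff algebra_simps)
next
  case False
  then have "\<bar>b\<bar> < \<bar>a\<bar>" and "\<bar>t * b\<bar> \<le> \<bar>b\<bar>"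
    using assms by (auto simp: abs_mult mult_left_le_one_le)
  then have "a + b \<ge> 0 \<longleftrightarrow> a \<ge> 0" and "a + t * b \<ge> 0 \<longleftrightarrow> a \<ge> 0"
    by linarith+
  then show ?thesis
    by (simp add: rho_def algebra_simps)
qed

lemma mult_nonneg_perturbed:
  fixes h a g :: real
  assumes "0 \<le> h * g" and "\<bar>a\<bar> < \<bar>h\<bar>"
  shows "0 \<le> (h + a) * g"
  using assms by (cases "h > 0") (auto simp: zero_le_mult_iff)

locale one_hidden_layer_net =
  fixes ap am :: real and K :: "'k set" and xs :: "'k \<Rightarrow> real^'d" and ys :: "'k \<Rightarrow> real"
    and P :: "(real^'d^'i) \<times> (real^'i)"
begin

abbreviation "L \<equiv> loss ap am K xs ys"

definition "residual k = net_out ap am P (xs k) - ys k"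
definition "activation i k = rho ap am (fst P $ i \<bullet> xs k)"
definition "activation_incr i k v = rho ap am ((fst P $ i + v) \<bullet> xs k) - activation i k"
definition "activation_correlation i = (\<Sum>k\<in>K. residual k * activation i k)"
definition "incr_correlation i v = (\<Sum>k\<in>K. residual k * activation_incr i k v)"

definition "pattern_preserving i v \<longleftrightarrow>
  (\<forall>k\<in>K. fst P $ i \<bullet> xs k = 0 \<or> \<bar>v \<bullet> xs k\<bar> < \<bar>fst P $ i \<bullet> xs k\<bar>)"

definition "output_incr V a k =
  (\<Sum>i\<in>UNIV. (snd P $ i + a $ i) * activation_incr i k (V $ i) + a $ i * activation i k)"
definition "output_incr_lin V a k =
  (\<Sum>i\<in>UNIV. snd P $ i * activation_incr i k (V $ i) + a $ i * activation i k)"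
definition "output_incr_quad V a k = (\<Sum>i\<in>UNIV. a $ i * activation_incr i k (V $ i))"

definition "ray_coeff1 V a = (\<Sum>k\<in>K. residual k * output_incr_lin V a k)"
definition "ray_coeff2 V a =
  (\<Sum>k\<in>K. residual k * output_incr_quad V a k + 1/2 * (output_incr_lin V a k)^2)"
definition "ray_coeff3 V a = (\<Sum>k\<in>K. output_incr_lin V a k * output_incr_quad V a k)"
definition "ray_coeff4 V a = (\<Sum>k\<in>K. 1/2 * (output_incr_quad V a k)^2)"

lemma activation_incr_zero [simp]: "activation_incr i k 0 = 0"
  by (simp add: activation_incr_def activation_def)

lemma incr_correlation_zero [simp]: "incr_correlation i 0 = 0"
  by (simp add: incr_correlation_def)

lemma pattern_preserving_zero [simp]: "pattern_preserving i 0"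
  by (simp add: pattern_preserving_def)

lemma net_out_shift:
  "net_out ap am (P + (V, a)) (xs k) = net_out ap am P (xs k) + output_incr V a k"
  by (simp add: net_out_def output_incr_def activation_incr_def activation_def
      sum.distrib[symmetric] algebra_simps)

lemma loss_shift:
  "L (P + (V, a)) - L P
    = (\<Sum>k\<in>K. residual k * output_incr V a k) + 1/2 * (\<Sum>k\<in>K. (output_incr V a k)^2)"
proof -
  have "(net_out ap am (P + (V, a)) (xs k) - ys k)^2 - (net_out ap am P (xs k) - ys k)^2
      = 2 * (residual k * output_incr V a k) + (output_incr V a k)^2" for k
    by (simp add: net_out_shift residual_def power2_eq_square algebra_simps)
  then show ?thesis
    by (simp add: loss_def sum_subtractf[symmetric] right_diff_distrib[symmetric]
        sum.distrib sum_distrib_left[symmetric] algebra_simps)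
qed

lemma residual_output_incr_sum:
  "(\<Sum>k\<in>K. residual k * output_incr V a k)
    = (\<Sum>i\<in>UNIV. (snd P $ i + a $ i) * incr_correlation i (V $ i))
      + (\<Sum>i\<in>UNIV. a $ i * activation_correlation i)"
  unfolding output_incr_def incr_correlation_def activation_correlation_def
  by (simp add: sum_distrib_left sum.distrib[symmetric] algebra_simps sum.swap[of _ K])

lemma activation_incr_scaleR:
  assumes "pattern_preserving i v" "k \<in> K" "0 \<le> t" "t \<le> 1"
  shows "activation_incr i k (t *\<^sub>R v) = t * activation_incr i k v"
  using assms rho_increment_homogeneous[of "fst P $ i \<bullet> xs k" "v \<bullet> xs k" t ap am]
  by (simp add: pattern_preserving_def activation_incr_def activation_def inner_add_left)

lemma output_incr_ray:
  assumes "\<forall>i. pattern_preserving i (V $ i)" "k \<in> K" "0 \<le> d" "d \<le> 1"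
  shows "output_incr (d *\<^sub>R V) (d *\<^sub>R a) k
    = d * output_incr_lin V a k + d^2 * output_incr_quad V a k"
  using activation_incr_scaleR[OF _ assms(2-4)] assms(1)
  by (simp add: output_incr_def output_incr_lin_def output_incr_quad_def
      sum_distrib_left sum.distrib[symmetric] power2_eq_square algebra_simps)

lemma loss_ray:
  assumes "\<forall>i. pattern_preserving i (V $ i)" "0 \<le> d" "d \<le> 1"
  shows "L (P + d *\<^sub>R (V, a)) - L P
    = d * ray_coeff1 V a + d^2 * ray_coeff2 V a + d^3 * ray_coeff3 V a + d^4 * ray_coeff4 V a"
proof -
  have "L (P + d *\<^sub>R (V, a)) - L P
      = (\<Sum>k\<in>K. residual k * output_incr (d *\<^sub>R V) (d *\<^sub>R a) k
          + 1/2 * (output_incr (d *\<^sub>R V) (d *\<^sub>R a) k)^2)"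
    using loss_shift[of "d *\<^sub>R V" "d *\<^sub>R a"] by (simp add: sum.distrib sum_distrib_left)
  also have "\<dots> = (\<Sum>k\<in>K. d * (residual k * output_incr_lin V a k)
      + d^2 * (residual k * output_incr_quad V a k + 1/2 * (output_incr_lin V a k)^2)
      + d^3 * (output_incr_lin V a k * output_incr_quad V a k)
      + d^4 * (1/2 * (output_incr_quad V a k)^2))"
    using output_incr_ray[OF assms(1) _ assms(2,3)]
    by (intro sum.cong) (simp_all add: power2_eq_square power3_eq_cube power4_eq_xxxx algebra_simps)
  finally show ?thesis
    by (simp only: ray_coeff1_def ray_coeff2_def ray_coeff3_def ray_coeff4_def sum_distrib_left)
      (simp only: sum.distrib)
qed

lemma stationary_ray_coeff1_nonneg:
  assumes "stationary_point L P" "\<forall>i. pattern_preserving i (V $ i)"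
  shows "ray_coeff1 V a \<ge> 0"
proof -
  obtain g where g: "((\<lambda>d. (L (P + d *\<^sub>R (V, a)) - L P) / d) \<longlongrightarrow> g) (at_right 0)" "g \<ge> 0"
    using assms(1) unfolding stationary_point_def by blast
  have "((\<lambda>d. (L (P + d *\<^sub>R (V, a)) - L P) / d) \<longlongrightarrow> ray_coeff1 V a) (at_right 0)"
    by (rule quartic_quotient_tendsto) (use loss_ray[OF assms(2)] in simp)
  from tendsto_unique[OF trivial_limit_at_right_real g(1) this] g(2) show ?thesis
    by simp
qed

lemma output_incr_lin_axis:
  "output_incr_lin (axis i v) (axis i s) k = snd P $ i * activation_incr i k v + s * activation i k"
proof -
  have "snd P $ j * activation_incr j k (axis i v $ j) + axis i s $ j * activation j k
      = (if j = i then snd P $ i * activation_incr i k v + s * activation i k else 0)" for j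
    by (simp add: axis_def)
  then show ?thesis
    by (simp add: output_incr_lin_def)
qed

lemma output_incr_quad_axis: "output_incr_quad (axis i v) (axis i s) k = s * activation_incr i k v"
proof -
  have "axis i s $ j * activation_incr j k (axis i v $ j)
      = (if j = i then s * activation_incr i k v else 0)" for j
    by (simp add: axis_def)
  then show ?thesis
    by (simp add: output_incr_quad_def)
qed

lemma ray_coeff1_axis:
  "ray_coeff1 (axis i v) (axis i s) = snd P $ i * incr_correlation i v + s * activation_correlation i"
  by (simp add: ray_coeff1_def output_incr_lin_axis incr_correlation_def activation_correlation_def
      distrib_left sum.distrib sum_distrib_left mult.left_commute)

lemma pattern_preserving_axis:
  assumes "pattern_preserving i v"
  shows "pattern_preserving j (axis i v $ j)"
  using assms by (simp add: axis_def)

lemma stationary_first_order_conditions: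
  assumes "stationary_point L P"
  shows "activation_correlation i = 0"
    and "pattern_preserving i v \<Longrightarrow> snd P $ i * incr_correlation i v \<ge> 0"
proof -
  have coeff1: "snd P $ i * incr_correlation i v + s * activation_correlation i \<ge> 0"
    if "pattern_preserving i v" for v s
    using stationary_ray_coeff1_nonneg[OF assms, of "axis i v" "axis i s"]
      pattern_preserving_axis[OF that]
    by (simp add: ray_coeff1_axis)
  from coeff1[of 0 1] coeff1[of 0 "-1"] show "activation_correlation i = 0"
    by simp
  from coeff1[of v 0] show "pattern_preserving i v \<Longrightarrow> snd P $ i * incr_correlation i v \<ge> 0"
    by simp
qed

lemma eventually_pattern_preserving:
  assumes "finite K"
  shows "\<forall>\<^sub>F Q in nhds P. \<forall>i. pattern_preserving i (fst Q $ i - fst P $ i)"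
proof (intro eventually_all_finite)
  fix i
  have "\<forall>\<^sub>F Q in nhds P. \<bar>(fst Q $ i - fst P $ i) \<bullet> xs k\<bar> < \<bar>fst P $ i \<bullet> xs k\<bar>"
    if "fst P $ i \<bullet> xs k \<noteq> 0" for k
  proof -
    have "((\<lambda>Q. \<bar>(fst Q $ i - fst P $ i) \<bullet> xs k\<bar>) \<longlongrightarrow> \<bar>(fst P $ i - fst P $ i) \<bullet> xs k\<bar>) (nhds P)"
      by (intro tendsto_intros filterlim_ident)
    then show ?thesis
      using that by (simp add: order_tendstoD(2))
  qed
  then show "\<forall>\<^sub>F Q in nhds P. pattern_preserving i (fst Q $ i - fst P $ i)"
    unfolding pattern_preserving_def
    by (intro eventually_ball_finite[OF assms] ballI) (auto elim: eventually_mono)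
qed

lemma eventually_output_weight_sign:
  "\<forall>\<^sub>F Q in nhds P. \<forall>i. snd P $ i \<noteq> 0 \<longrightarrow> \<bar>snd Q $ i - snd P $ i\<bar> < \<bar>snd P $ i\<bar>"
proof (intro eventually_all_finite)
  fix i
  have "((\<lambda>Q. \<bar>snd Q $ i - snd P $ i\<bar>) \<longlongrightarrow> \<bar>snd P $ i - snd P $ i\<bar>) (nhds P)"
    by (intro tendsto_intros filterlim_ident)
  then show "\<forall>\<^sub>F Q in nhds P. snd P $ i \<noteq> 0 \<longrightarrow> \<bar>snd Q $ i - snd P $ i\<bar> < \<bar>snd P $ i\<bar>"
    by (cases "snd P $ i = 0") (auto intro: order_tendstoD(2))
qed

lemma local_minimum_without_dead_unit_gain:
  assumes "finite K"
    and correlation: "\<And>i. activation_correlation i = 0"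
    and alive: "\<And>i v. pattern_preserving i v \<Longrightarrow> snd P $ i * incr_correlation i v \<ge> 0"
    and dead: "\<And>i v. snd P $ i = 0 \<Longrightarrow> pattern_preserving i v \<Longrightarrow> incr_correlation i v = 0"
  shows "local_minimum L P"
proof -
  have "\<forall>\<^sub>F Q in nhds P. L P \<le> L Q"
    using eventually_pattern_preserving[OF assms(1)] eventually_output_weight_sign
  proof eventually_elim
    case (elim Q)
    define V where "V = fst Q - fst P"
    define a where "a = snd Q - snd P"
    have Q: "Q = P + (V, a)"
      by (simp add: V_def a_def prod_eq_iff)
    have "(snd P $ i + a $ i) * incr_correlation i (V $ i) \<ge> 0" for i
    proof (cases "snd P $ i = 0")
      case True
      then show ?thesis
        using elim dead[of i "V $ i"] by (simp add: V_def)
    next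
      case False
      then show ?thesis
        using elim alive[of i "V $ i"]
        by (intro mult_nonneg_perturbed) (simp_all add: V_def a_def)
    qed
    then have "0 \<le> (\<Sum>i\<in>UNIV. (snd P $ i + a $ i) * incr_correlation i (V $ i))
        + 1/2 * (\<Sum>k\<in>K. (output_incr V a k)^2)"
      by (simp add: sum_nonneg)
    also have "\<dots> = L Q - L P"
      by (simp add: Q loss_shift residual_output_incr_sum correlation)
    finally show ?case
      by simp
  qed
  then show ?thesis
    unfolding local_minimum_def eventually_nhds_metric by blast
qed

lemma dead_unit_escape_ray:
  assumes "activation_correlation i = 0" and "snd P $ i = 0"
    and "pattern_preserving i v" and "incr_correlation i v \<noteq> 0"
  obtains u c2 c3 c4 where "u \<noteq> 0" and "c2 < 0"
    and "\<And>d. 0 < d \<Longrightarrow> d \<le> 1 \<Longrightarrow> L (P + d *\<^sub>R u) - L P = d^2 * c2 + d^3 * c3 + d^4 * c4"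
proof -
  define G where "G = incr_correlation i v"
  define S where "S = (\<Sum>k\<in>K. (activation i k)^2)"
  have "S \<ge> 0"
    by (simp add: S_def sum_nonneg)
  text \<open>The quadratic coefficient along the ray is \<open>t * G + t\<^sup>2 * S / 2\<close>, which is negative
    for every small \<open>t\<close> of sign opposite to \<open>G\<close>; this \<open>t\<close> is one such choice.\<close>
  define t where "t = - G / (1 + S)"
  have "t \<noteq> 0"
    using assms(4) \<open>S \<ge> 0\<close> by (simp add: t_def G_def)
  have coeff1: "ray_coeff1 (axis i v) (axis i t) = 0"
    by (simp add: ray_coeff1_axis assms(1,2))
  have "ray_coeff2 (axis i v) (axis i t) = t * G + t^2 / 2 * S"
    by (simp add: ray_coeff2_def output_incr_lin_axis output_incr_quad_axis assms(2) G_def S_def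
        incr_correlation_def sum.distrib sum_distrib_left power_mult_distrib algebra_simps)
  also have "\<dots> = -(G^2 * (2 + S) / (2 * (1 + S)^2))"
    using \<open>S \<ge> 0\<close>
    by (simp add: t_def power_divide divide_simps) (simp add: power2_eq_square algebra_simps)
  also have "\<dots> < 0"
    using assms(4) \<open>S \<ge> 0\<close> by (simp add: G_def)
  finally have coeff2: "ray_coeff2 (axis i v) (axis i t) < 0" .
  show ?thesis
  proof
    show "(axis i v, axis i t) \<noteq> 0"
      using \<open>t \<noteq> 0\<close> by (simp add: zero_prod_def axis_eq_0_iff)
    show "ray_coeff2 (axis i v) (axis i t) < 0"
      by (fact coeff2)
    show "L (P + d *\<^sub>R (axis i v, axis i t)) - L P = d^2 * ray_coeff2 (axis i v) (axis i t)
        + d^3 * ray_coeff3 (axis i v) (axis i t) + d^4 * ray_coeff4 (axis i v) (axis i t)"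
      if "0 < d" "d \<le> 1" for d
      using loss_ray[of "axis i v" d "axis i t"] pattern_preserving_axis[OF assms(3)] that coeff1
      by simp
  qed
qed

end

theorem corollary1:
  fixes ap am :: real
    and K :: "'k set"
    and xs :: "'k \<Rightarrow> real^'d"
    and ys :: "'k \<Rightarrow> real"
    and P :: "(real^'d^'i) \<times> (real^'i)"
  assumes "CARD('d) > 1"
    and "ap \<noteq> am"
    and "finite K"
    and "stationary_point (loss ap am K xs ys) P"
    and "\<not> local_minimum (loss ap am K xs ys) P"
  shows "\<exists>l C. norm l = 1 \<and> C < 0 \<and>
    (\<forall>\<^sub>F \<delta> in at_right 0. loss ap am K xs ys (P + \<delta> *\<^sub>R l) - loss ap am K xs ys P < 0) \<and>
    (\<lambda>\<delta>. loss ap am K xs ys (P + \<delta> *\<^sub>R l) - loss ap am K xs ys P) \<sim>[at_right 0] (\<lambda>\<delta>. C * \<delta>^2)"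
proof -
  interpret one_hidden_layer_net ap am K xs ys P .
  note first_order = stationary_first_order_conditions[OF assms(4)]
  obtain i v where "snd P $ i = 0" "pattern_preserving i v" "incr_correlation i v \<noteq> 0"
    using local_minimum_without_dead_unit_gain[OF assms(3) first_order] assms(5) by blast
  then obtain u c2 c3 c4 where "u \<noteq> 0" "c2 < 0"
    "\<And>d. 0 < d \<Longrightarrow> d \<le> 1 \<Longrightarrow> L (P + d *\<^sub>R u) - L P = d^2 * c2 + d^3 * c3 + d^4 * c4"
    using dead_unit_escape_ray first_order(1) by metis
  then show ?thesis
    by (rule unit_direction_of_quadratic_decrease)
qed

end
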